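(* For $\theta>0$ and an integer $n\ge1$, let $X_{1,n}$ be a random variable on $\{1,\dots,n\}$ with $$P\{X_{1,n}=k\}=\frac\theta n\,\frac{n!}{(n-k)!}\,\frac{\Gamma(\theta+n-k)}{\Gamma(\theta+n)},\quad k=1,\dots,n.$$ Let $n=n(\theta)\to\infty$ as $\theta\to\infty$ in one of the regimes: Case B: $\theta/n\to\infty$; Case C: $\theta/n\to c\in(0,\infty)$; Case D: $\theta/n\to0$. Then, as $\theta\to\infty$, the family of laws of $X_{1,n}/n$ satisfies an LDP on $[0,1]$ with speed $\gamma(\theta)$ and rate function $I$, where $\gamma(\theta)=n\log\frac\theta n$ and $I(x)=x$ in Case B; $\gamma(\theta)=\theta$ and $$I(x)=I_c(x)=\frac1c\big[(c+1)\log(c+1)+(1-x)\log(1-x)-(c+1-x)\log(c+1-x)\big]$$ in Case C; and $\gamma(\theta)=\theta$ and $I(x)=\log\frac1{1-x}$ (with value $+\infty$ at $x=1$) in Case D.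
   Context: $X_{1,n}$ is the size of the first (oldest) age class in a random sample of size $n$ from a $PD(\theta)$ population. Convention $0\log0=0$. An LDP with speed $\gamma(\theta)$ uses normalization $\gamma(\theta)^{-1}\log$ as $\theta\to\infty$. *)

theory Defs
  imports "HOL-Analysis.Analysis" "HOL-Library.Liminf_Limsup"
begin

text \<open>Law of the size X_{1,n} of the oldest age class in a sample of size n from PD(theta):
  P{X_{1,n} = k} for k = 1..n (and 0 otherwise).\<close>
definition X1_pmf :: "real \<Rightarrow> nat \<Rightarrow> nat \<Rightarrow> real" where
  "X1_pmf \<theta> n k =
     (if 1 \<le> k \<and> k \<le> n
      then \<theta> / real n * (fact n / fact (n - k)) * (Gamma (\<theta> + real n - real k) / Gamma (\<theta> + real n))
      else 0)"

definition scaled_law :: "real \<Rightarrow> nat \<Rightarrow> real set \<Rightarrow> real" where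
  "scaled_law \<theta> n A = (\<Sum>k\<in>{1..n}. if real k / real n \<in> A then X1_pmf \<theta> n k else 0)"

definition log_scaled :: "real \<Rightarrow> real \<Rightarrow> ereal" where
  "log_scaled g p = (if p \<le> 0 then -\<infinity> else ereal (ln p / g))"

text \<open>Closed/open subsets of [0,1] are exactly the traces F \<inter> [0,1] of closed/open sets of reals.\<close>
definition LDP01 :: "(real \<Rightarrow> real set \<Rightarrow> real) \<Rightarrow> (real \<Rightarrow> real) \<Rightarrow> (real \<Rightarrow> ereal) \<Rightarrow> bool" where
  "LDP01 P \<gamma> I \<longleftrightarrow>
     (\<forall>x\<in>{0..1}. 0 \<le> I x) \<and>
     (\<forall>a::ereal. closed {x\<in>{0..1}. I x \<le> a}) \<and>
     (\<forall>F. closed F \<longrightarrow>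
        Limsup at_top (\<lambda>\<theta>. log_scaled (\<gamma> \<theta>) (P \<theta> (F \<inter> {0..1}))) \<le> - (INF x\<in>F \<inter> {0..1}. I x)) \<and>
     (\<forall>G. open G \<longrightarrow>
        - (INF x\<in>G \<inter> {0..1}. I x) \<le> Liminf at_top (\<lambda>\<theta>. log_scaled (\<gamma> \<theta>) (P \<theta> (G \<inter> {0..1}))))"

definition xlogx :: "real \<Rightarrow> real" where
  "xlogx t = (if t = 0 then 0 else t * ln t)"

definition rate_C :: "real \<Rightarrow> real \<Rightarrow> ereal" where
  "rate_C c x = ereal ((1 / c) * (xlogx (c + 1) + xlogx (1 - x) - xlogx (c + 1 - x)))"

definition rate_D :: "real \<Rightarrow> ereal" where
  "rate_D x = (if x \<ge> 1 then \<infinity> else ereal (ln (1 / (1 - x))))"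

end

theory Submission
  imports Defs "HOL-Real_Asymp.Real_Asymp"
begin

text \<open>
  Everything is driven by the tail \<open>P{X\<^sub>1\<^sub>,\<^sub>n \<ge> k} = \<Prod>j=1..k-1. (n - j) / (\<theta> + n - j)\<close>.
  Since \<open>X\<^sub>1\<^sub>,\<^sub>n / n\<close> lives on a grid, an upper bound for a closed set \<open>F\<close> is the tail at
  \<open>inf F\<close>, and a lower bound for a neighbourhood of \<open>x\<close> is the tail at \<open>x\<close> minus the tail at
  \<open>x + \<delta>\<close>; each factor of the product is at most \<open>exp (-\<theta> / (\<theta> + n))\<close>, so the second
  tail is at most half the first once \<open>\<delta> n\<close> and \<open>\<theta>\<close> are large. Hence the LDP reduces to the
  asymptotics of \<open>\<gamma>(\<theta>)\<^sup>-\<^sup>1 log P{X\<^sub>1\<^sub>,\<^sub>n \<ge> a n} \<rightarrow> -I(a)\<close> for each \<open>a\<close>, which in turn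
  follow from comparing \<open>\<Sum> ln (m - j)\<close> with integrals of \<open>ln\<close> (cases C and D) or from
  bounding each factor by \<open>n/\<theta>\<close> (case B). All three rate functions are nondecreasing and
  continuous, which is what makes the tail at \<open>inf F\<close> the dominating term.
\<close>

definition X1_tail :: "real \<Rightarrow> nat \<Rightarrow> nat \<Rightarrow> real" where
  "X1_tail \<theta> n k = (\<Prod>j\<in>{1..<k}. (real n - real j) / (\<theta> + real n - real j))"

lemma X1_tail_Suc:
  "1 \<le> k \<Longrightarrow> X1_tail \<theta> n (Suc k) = X1_tail \<theta> n k * ((real n - real k) / (\<theta> + real n - real k))"
  unfolding X1_tail_def by simp

lemma X1_tail_split:
  "1 \<le> k1 \<Longrightarrow> k1 \<le> k2 \<Longrightarrow>
   X1_tail \<theta> n k2 = X1_tail \<theta> n k1 * (\<Prod>j\<in>{k1..<k2}. (real n - real j) / (\<theta> + real n - real j))"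
  unfolding X1_tail_def by (simp add: prod.atLeastLessThan_concat)

lemma tail_factor_pos: "\<theta> > 0 \<Longrightarrow> j < n \<Longrightarrow> (real n - real j) / (\<theta> + real n - real j) > 0"
  by (simp add: of_nat_less_iff)

lemma tail_factor_le_1: "\<theta> > 0 \<Longrightarrow> j \<le> n \<Longrightarrow> (real n - real j) / (\<theta> + real n - real j) \<le> 1"
  by (simp add: divide_le_eq_1)

lemma X1_tail_pos: "\<theta> > 0 \<Longrightarrow> k \<le> n \<Longrightarrow> X1_tail \<theta> n k > 0"
  unfolding X1_tail_def by (intro prod_pos tail_factor_pos) auto

lemma X1_tail_nonneg: "\<theta> > 0 \<Longrightarrow> k \<le> Suc n \<Longrightarrow> X1_tail \<theta> n k \<ge> 0"
  unfolding X1_tail_def by (intro prod_nonneg) auto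

lemma X1_tail_le_1: "\<theta> > 0 \<Longrightarrow> k \<le> Suc n \<Longrightarrow> X1_tail \<theta> n k \<le> 1"
  unfolding X1_tail_def by (intro prod_le_1) (auto intro: tail_factor_le_1)

lemma X1_tail_Suc_self: "1 \<le> n \<Longrightarrow> X1_tail \<theta> n (Suc n) = 0"
  unfolding X1_tail_def by (rule prod_zero) auto

lemma Gamma_plus1_pos: "x > 0 \<Longrightarrow> Gamma (x + 1) = x * Gamma (x::real)"
  by (rule Gamma_plus1) (use nonpos_Ints_nonpos in force)

lemma X1_pmf_1:
  assumes "\<theta> > 0" "1 \<le> n"
  shows "X1_pmf \<theta> n 1 = \<theta> / (\<theta> + real n - 1)"
proof -
  have pos: "\<theta> + real n - 1 > 0" using assms by simp
  have Gamma_eq: "Gamma (\<theta> + real n) = (\<theta> + real n - 1) * Gamma (\<theta> + real n - 1)"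
    using Gamma_plus1_pos[OF pos] by simp
  have "(fact n :: real) = real n * fact (n - 1)"
    using assms(2) by (simp add: fact_reduce)
  then have "X1_pmf \<theta> n 1 = \<theta> * (Gamma (\<theta> + real n - 1) / Gamma (\<theta> + real n))"
    using assms by (simp add: X1_pmf_def)
  also have "\<dots> = \<theta> / (\<theta> + real n - 1)"
    using Gamma_eq Gamma_real_pos[OF pos] by simp
  finally show ?thesis .
qed

lemma X1_pmf_Suc:
  assumes "\<theta> > 0" "1 \<le> k" "Suc k \<le> n"
  shows "X1_pmf \<theta> n (Suc k) = X1_pmf \<theta> n k * ((real n - real k) / (\<theta> + real n - real k - 1))"
proof -
  define G where "G = Gamma (\<theta> + real n - real k - 1)"
  have Gamma_eq: "Gamma (\<theta> + real n - real k) = (\<theta> + real n - real k - 1) * G"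
    unfolding G_def using Gamma_plus1_pos[of "\<theta> + real n - real k - 1"] assms by simp
  have fact_eq: "fact (n - k) = (real n - real k) * (fact (n - Suc k) :: real)"
  proof -
    have "n - k = Suc (n - Suc k)" using assms by simp
    then show ?thesis using assms by (simp only: fact_Suc of_nat_mult of_nat_fact) simp
  qed
  have pmf_k: "X1_pmf \<theta> n k = \<theta> / real n * (fact n / fact (n - k)) * (Gamma (\<theta> + real n - real k) / Gamma (\<theta> + real n))"
    using assms by (simp add: X1_pmf_def)
  have pmf_Suc: "X1_pmf \<theta> n (Suc k) = \<theta> / real n * (fact n / fact (n - Suc k)) * (G / Gamma (\<theta> + real n))"
    using assms by (simp add: X1_pmf_def G_def algebra_simps)
  have cancel: "a * (b / (p * c)) * ((q * d) / e) * (p / q) = a * (b / c) * (d / e)"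
    if "p \<noteq> 0" "q \<noteq> 0" "c \<noteq> 0" for a b p q c d e :: real
    using that by (simp add: field_simps)
  show ?thesis unfolding pmf_k pmf_Suc Gamma_eq fact_eq
    by (rule cancel[symmetric]) (use assms in auto)
qed

lemma X1_pmf_eq_tail_mult:
  assumes "\<theta> > 0" "1 \<le> k" "k \<le> n"
  shows "X1_pmf \<theta> n k = X1_tail \<theta> n k * (\<theta> / (\<theta> + real n - real k))"
  using assms(2,3)
proof (induction k rule: dec_induct)
  case base
  then show ?case using X1_pmf_1[OF assms(1)] by (simp add: X1_tail_def)
next
  case (step k)
  have swap: "T * (a / p) * (b / q) = T * (b / p) * (a / q)" if "p \<noteq> 0" "q \<noteq> 0" for T a b p q :: real
    using that by (simp add: field_simps)
  have "X1_pmf \<theta> n (Suc k)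
      = X1_tail \<theta> n k * (\<theta> / (\<theta> + real n - real k)) * ((real n - real k) / (\<theta> + real n - real k - 1))"
    using X1_pmf_Suc[OF assms(1) step(1)] step by simp
  also have "\<dots> = X1_tail \<theta> n k * ((real n - real k) / (\<theta> + real n - real k)) * (\<theta> / (\<theta> + real n - real k - 1))"
    by (rule swap) (use assms step in auto)
  also have "\<dots> = X1_tail \<theta> n (Suc k) * (\<theta> / (\<theta> + real n - real (Suc k)))"
    using X1_tail_Suc[OF step(1)] by (simp add: diff_add_eq_diff_diff_swap)
  finally show ?case .
qed

lemma X1_pmf_eq_tail_diff:
  assumes "\<theta> > 0" "1 \<le> k" "k \<le> n"
  shows "X1_pmf \<theta> n k = X1_tail \<theta> n k - X1_tail \<theta> n (Suc k)"
proof -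
  have "\<theta> + real n - real k \<noteq> 0" using assms by simp
  then show ?thesis
    using X1_pmf_eq_tail_mult[OF assms] X1_tail_Suc[OF assms(2)] by (simp add: field_simps)
qed

lemma X1_pmf_nonneg: "\<theta> > 0 \<Longrightarrow> X1_pmf \<theta> n k \<ge> 0"
  using X1_pmf_eq_tail_mult[of \<theta> k n] X1_tail_nonneg[of \<theta> k n]
  by (cases "1 \<le> k \<and> k \<le> n") (auto simp: X1_pmf_def)

lemma sum_X1_pmf_eq_tail_diff:
  assumes "\<theta> > 0" "1 \<le> k1" "k1 \<le> k2" "k2 \<le> Suc n"
  shows "(\<Sum>k\<in>{k1..<k2}. X1_pmf \<theta> n k) = X1_tail \<theta> n k1 - X1_tail \<theta> n k2"
  using assms(3,4)
proof (induction k2 rule: dec_induct)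
  case (step m)
  then show ?case using X1_pmf_eq_tail_diff[OF assms(1), of m n] assms(2) by simp
qed simp

lemma X1_tail_antimono:
  assumes "\<theta> > 0" "1 \<le> k1" "k1 \<le> k2" "k2 \<le> Suc n"
  shows "X1_tail \<theta> n k2 \<le> X1_tail \<theta> n k1"
  using sum_X1_pmf_eq_tail_diff[OF assms] sum_nonneg[of "{k1..<k2}" "X1_pmf \<theta> n"] X1_pmf_nonneg[OF assms(1)]
  by simp

lemma X1_tail_ratio_le_exp:
  assumes "\<theta> > 0" "1 \<le> k1" "k1 \<le> k2" "k2 \<le> n"
  shows "X1_tail \<theta> n k2 \<le> X1_tail \<theta> n k1 * exp (- real (k2 - k1) * \<theta> / (\<theta> + real n))"
proof -
  let ?f = "\<lambda>j. (real n - real j) / (\<theta> + real n - real j)"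
  have factor_le: "?f j \<le> exp (- \<theta> / (\<theta> + real n))" if "j \<le> n" for j
  proof -
    have "?f j \<le> real n / (\<theta> + real n)" using assms(1) that
      by (simp add: divide_simps) (simp add: algebra_simps)
    also have "\<dots> = 1 + (- \<theta> / (\<theta> + real n))" using assms(1) by (simp add: field_simps)
    also have "\<dots> \<le> exp (- \<theta> / (\<theta> + real n))" by (rule exp_ge_add_one_self)
    finally show ?thesis .
  qed
  have "(\<Prod>j\<in>{k1..<k2}. ?f j) \<le> (\<Prod>j\<in>{k1..<k2}. exp (- \<theta> / (\<theta> + real n)))"
    by (intro prod_mono) (use assms factor_le in auto)
  also have "\<dots> = exp (real (k2 - k1) * (- \<theta> / (\<theta> + real n)))"
    by (simp add: exp_of_nat_mult[symmetric])
  finally have "(\<Prod>j\<in>{k1..<k2}. ?f j) \<le> exp (- real (k2 - k1) * \<theta> / (\<theta> + real n))" by simp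
  then show ?thesis unfolding X1_tail_split[OF assms(2,3), of \<theta> n]
    by (rule mult_left_mono) (use X1_tail_nonneg[OF assms(1), of k1 n] assms in simp)
qed

lemma X1_tail_halves:
  assumes "\<theta> > 0" "1 \<le> k1" "k1 \<le> k2" "k2 \<le> n" and gap: "\<theta> + real n \<le> real (k2 - k1) * \<theta>"
  shows "X1_tail \<theta> n k2 \<le> X1_tail \<theta> n k1 / 2"
proof -
  have "1 \<le> real (k2 - k1) * \<theta> / (\<theta> + real n)"
    using gap assms(1) by (simp add: le_divide_eq del: of_nat_diff)
  then have "- real (k2 - k1) * \<theta> / (\<theta> + real n) \<le> -1"
    by linarith
  then have "exp (- real (k2 - k1) * \<theta> / (\<theta> + real n)) \<le> exp (-1)"
    by (simp only: exp_le_cancel_iff)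
  also have "exp (-1 :: real) \<le> 1 / 2"
    using exp_ge_add_one_self[of "1::real"] by (simp add: exp_minus field_simps)
  finally have "X1_tail \<theta> n k1 * exp (- real (k2 - k1) * \<theta> / (\<theta> + real n)) \<le> X1_tail \<theta> n k1 * (1 / 2)"
    using X1_tail_pos[OF assms(1), of k1 n] assms by (intro mult_left_mono) auto
  then show ?thesis using X1_tail_ratio_le_exp[OF assms(1-4)] by simp
qed

lemma ln_X1_tail:
  assumes "\<theta> > 0" "k \<le> n"
  shows "ln (X1_tail \<theta> n k) = (\<Sum>j\<in>{1..<k}. ln (real n - real j)) - (\<Sum>j\<in>{1..<k}. ln (\<theta> + real n - real j))"
proof -
  have "ln (X1_tail \<theta> n k) = (\<Sum>j\<in>{1..<k}. ln ((real n - real j) / (\<theta> + real n - real j)))"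
    unfolding X1_tail_def by (rule ln_prod) (use assms tail_factor_pos[OF assms(1)] in force)+
  also have "\<dots> = (\<Sum>j\<in>{1..<k}. ln (real n - real j) - ln (\<theta> + real n - real j))"
  proof (rule sum.cong[OF refl])
    fix j assume "j \<in> {1..<k}"
    then have "real n - real j > 0" "\<theta> + real n - real j > 0" using assms by auto
    then show "ln ((real n - real j) / (\<theta> + real n - real j)) = ln (real n - real j) - ln (\<theta> + real n - real j)"
      by (simp add: ln_div)
  qed
  finally show ?thesis by (simp add: sum_subtractf)
qed

definition ceil_index :: "real \<Rightarrow> nat \<Rightarrow> nat" where
  "ceil_index a n = max 1 (nat \<lceil>a * real n\<rceil>)"

lemma ceil_index_bounds:
  assumes "0 \<le> a" "a \<le> 1" "1 \<le> n"
  shows "1 \<le> ceil_index a n" "ceil_index a n \<le> n"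
    "a * real n \<le> real (ceil_index a n)" "real (ceil_index a n) \<le> a * real n + 1"
proof -
  have "a * real n \<le> real n" using assms by (simp add: mult_left_le_one_le)
  then have "nat \<lceil>a * real n\<rceil> \<le> n" by (simp add: nat_le_iff ceiling_le_iff)
  then show "1 \<le> ceil_index a n" "ceil_index a n \<le> n" using assms(3) by (auto simp: ceil_index_def)
  show "a * real n \<le> real (ceil_index a n)"
    using real_nat_ceiling_ge[of "a * real n"] unfolding ceil_index_def by linarith
  show "real (ceil_index a n) \<le> a * real n + 1"
  proof (cases "a * real n \<le> 0")
    case True
    then show ?thesis using assms by (simp add: ceil_index_def)
  next
    case False
    then have "nat \<lceil>a * real n\<rceil> \<ge> 1" by linarith
    then have "ceil_index a n = nat \<lceil>a * real n\<rceil>" by (simp add: ceil_index_def)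
    then show ?thesis using False by linarith
  qed
qed

lemma ceil_index_1: "1 \<le> n \<Longrightarrow> ceil_index 1 n = n"
  by (simp add: ceil_index_def)

lemma ceil_index_mono: "a \<le> b \<Longrightarrow> ceil_index a n \<le> ceil_index b n"
  unfolding ceil_index_def by (intro max.mono nat_mono ceiling_mono mult_right_mono) auto

lemma scaled_law_mono: "\<theta> > 0 \<Longrightarrow> A \<subseteq> B \<Longrightarrow> scaled_law \<theta> n A \<le> scaled_law \<theta> n B"
  unfolding scaled_law_def by (intro sum_mono) (auto simp: X1_pmf_nonneg)

lemma scaled_law_le_X1_tail:
  assumes "\<theta> > 0" "1 \<le> n" "0 \<le> a" "a \<le> 1" and lower: "\<forall>x\<in>S. a \<le> x"
  shows "scaled_law \<theta> n S \<le> X1_tail \<theta> n (ceil_index a n)"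
proof -
  let ?K = "ceil_index a n"
  have K: "1 \<le> ?K" "?K \<le> n" "a * real n \<le> real ?K" using ceil_index_bounds[OF assms(3,4,2)] by auto
  have "scaled_law \<theta> n S \<le> (\<Sum>k\<in>{1..n}. if ?K \<le> k then X1_pmf \<theta> n k else 0)"
    unfolding scaled_law_def
  proof (intro sum_mono)
    fix k assume k: "k \<in> {1..n}"
    have "?K \<le> k" if "real k / real n \<in> S"
    proof -
      have "a * real n \<le> real k" using lower that assms(2) by (auto simp: field_simps)
      then show ?thesis using k unfolding ceil_index_def by (simp add: nat_le_iff ceiling_le_iff)
    qed
    then show "(if real k / real n \<in> S then X1_pmf \<theta> n k else 0) \<le> (if ?K \<le> k then X1_pmf \<theta> n k else 0)"
      using X1_pmf_nonneg[OF assms(1)] by auto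
  qed
  also have "\<dots> = (\<Sum>k\<in>{k\<in>{1..n}. ?K \<le> k}. X1_pmf \<theta> n k)"
    by (rule sum.inter_filter[symmetric]) simp
  also have "{k\<in>{1..n}. ?K \<le> k} = {?K..<Suc n}" using K by auto
  also have "(\<Sum>k\<in>{?K..<Suc n}. X1_pmf \<theta> n k) = X1_tail \<theta> n ?K - X1_tail \<theta> n (Suc n)"
    by (rule sum_X1_pmf_eq_tail_diff) (use assms K in auto)
  finally show ?thesis using X1_tail_Suc_self[OF assms(2)] by simp
qed

lemma X1_tail_diff_le_scaled_law:
  assumes "\<theta> > 0" "1 \<le> k1" "k1 \<le> k2" "k2 \<le> Suc n"
    and grid: "\<And>k. k1 \<le> k \<Longrightarrow> k < k2 \<Longrightarrow> real k / real n \<in> S"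
  shows "X1_tail \<theta> n k1 - X1_tail \<theta> n k2 \<le> scaled_law \<theta> n S"
proof -
  have "X1_tail \<theta> n k1 - X1_tail \<theta> n k2 = (\<Sum>k\<in>{k1..<k2}. if real k / real n \<in> S then X1_pmf \<theta> n k else 0)"
    using sum_X1_pmf_eq_tail_diff[OF assms(1-4)] grid by (auto intro: sum.cong)
  also have "\<dots> \<le> scaled_law \<theta> n S" unfolding scaled_law_def
    by (rule sum_mono2) (use assms X1_pmf_nonneg[OF assms(1)] in auto)
  finally show ?thesis .
qed

lemma X1_tail_le_scaled_law_1:
  assumes "\<theta> > 0" "1 \<le> n"
  shows "X1_tail \<theta> n n \<le> scaled_law \<theta> n {1}"
proof -
  have "X1_tail \<theta> n n - X1_tail \<theta> n (Suc n) \<le> scaled_law \<theta> n {1}"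
    by (rule X1_tail_diff_le_scaled_law) (use assms in \<open>auto simp: less_Suc_eq\<close>)
  then show ?thesis using X1_tail_Suc_self[OF assms(2)] by simp
qed

lemma half_X1_tail_le_scaled_law:
  assumes "\<theta> > 0" "1 \<le> n" "0 \<le> x" "0 < \<delta>" "x + \<delta> \<le> 1"
    and large: "4 / \<delta> \<le> real n" "4 / \<delta> \<le> \<theta>"
  shows "X1_tail \<theta> n (ceil_index x n) / 2 \<le> scaled_law \<theta> n {x..<x + \<delta>}"
proof -
  define k1 where "k1 = ceil_index x n"
  define k2 where "k2 = nat \<lceil>(x + \<delta>) * real n\<rceil>"
  have n_pos: "real n > 0" using assms by simp
  have k1: "1 \<le> k1" "k1 \<le> n" "x * real n \<le> real k1" "real k1 \<le> x * real n + 1"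
    using ceil_index_bounds[of x n] assms unfolding k1_def by auto
  have "(x + \<delta>) * real n \<le> real n" using assms n_pos by (simp add: mult_left_le_one_le)
  then have k2: "(x + \<delta>) * real n \<le> real k2" "k2 \<le> n"
    unfolding k2_def by (auto simp: nat_le_iff ceiling_le_iff intro: real_nat_ceiling_ge)
  have "\<delta> * real n \<ge> 4" "\<delta> * \<theta> \<ge> 4" using large assms(4) by (simp_all add: field_simps)
  then have "4 * \<theta> \<le> \<delta> * real n * \<theta>" "4 * real n \<le> \<delta> * real n * \<theta>"
    using assms(1) n_pos mult_right_mono[of 4 "\<delta> * \<theta>" "real n"] by (auto simp: mult_right_mono algebra_simps)
  moreover have "(\<delta> * real n - 1) * \<theta> = \<delta> * real n * \<theta> - \<theta>" by (simp add: algebra_simps)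
  ultimately have spread: "\<theta> + real n \<le> (\<delta> * real n - 1) * \<theta>" using n_pos by linarith
  have gap: "real k2 - real k1 \<ge> \<delta> * real n - 1" using k1 k2 by (simp add: algebra_simps)
  then have k12: "k1 \<le> k2" using \<open>\<delta> * real n \<ge> 4\<close> by linarith
  have "(\<delta> * real n - 1) * \<theta> \<le> real (k2 - k1) * \<theta>"
    using gap k12 assms(1) by (intro mult_right_mono) auto
  then have half: "X1_tail \<theta> n k2 \<le> X1_tail \<theta> n k1 / 2"
    using X1_tail_halves[OF assms(1) k1(1) k12 k2(2)] spread by simp
  have "X1_tail \<theta> n k1 - X1_tail \<theta> n k2 \<le> scaled_law \<theta> n {x..<x + \<delta>}"
  proof (rule X1_tail_diff_le_scaled_law[OF assms(1) k1(1) k12])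
    fix k assume "k1 \<le> k" "k < k2"
    then have lower: "x * real n \<le> real k" using k1(3) of_nat_mono[of k1 k] by linarith
    have "int k < \<lceil>(x + \<delta>) * real n\<rceil>" using \<open>k < k2\<close> unfolding k2_def by linarith
    then have "real k < (x + \<delta>) * real n" by (simp add: less_ceiling_iff)
    with lower show "real k / real n \<in> {x..<x + \<delta>}" using n_pos by (simp add: field_simps)
  qed (use k2 in simp)
  then show ?thesis using half unfolding k1_def by simp
qed

lemma log_scaled_le_ln:
  assumes "g > 0" "p \<le> q" "q > 0"
  shows "log_scaled g p \<le> ereal (ln q / g)"
  using assms by (cases "p \<le> 0") (auto simp: log_scaled_def divide_right_mono)

lemma ln_le_log_scaled:
  assumes "g > 0" "q \<le> p" "q > 0"
  shows "ereal (ln q / g) \<le> log_scaled g p"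
  using assms by (auto simp: log_scaled_def divide_right_mono)

locale X1_tail_asymptotics =
  fixes n :: "real \<Rightarrow> nat" and \<gamma> :: "real \<Rightarrow> real" and J :: "real \<Rightarrow> ereal"
  assumes n_at_top: "filterlim n at_top at_top"
    and \<gamma>_at_top: "filterlim \<gamma> at_top at_top"
    and tail_limit: "\<And>a. a \<in> {0..1} \<Longrightarrow>
      ((\<lambda>\<theta>. ereal (ln (X1_tail \<theta> (n \<theta>) (ceil_index a (n \<theta>))) / \<gamma> \<theta>)) \<longlongrightarrow> - J a) at_top"
begin

abbreviation tail_rate :: "real \<Rightarrow> real \<Rightarrow> ereal" where
  "tail_rate a \<theta> \<equiv> ereal (ln (X1_tail \<theta> (n \<theta>) (ceil_index a (n \<theta>))) / \<gamma> \<theta>)"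

lemma eventually_admissible: "eventually (\<lambda>\<theta>. \<theta> > 0 \<and> 1 \<le> n \<theta> \<and> \<gamma> \<theta> > 0) at_top"
proof -
  have "eventually (\<lambda>\<theta>. 1 \<le> n \<theta>) at_top" "eventually (\<lambda>\<theta>. 0 < \<gamma> \<theta>) at_top"
    using n_at_top \<gamma>_at_top[unfolded filterlim_at_top_dense] by (auto simp: filterlim_at_top)
  then show ?thesis using eventually_gt_at_top[of "0::real"] by eventually_elim simp
qed

lemma rate_nonneg:
  assumes "a \<in> {0..1}"
  shows "0 \<le> J a"
proof -
  have "eventually (\<lambda>\<theta>. tail_rate a \<theta> \<le> 0) at_top"
    using eventually_admissible
  proof eventually_elim
    case (elim \<theta>)
    then have "ceil_index a (n \<theta>) \<le> n \<theta>" using ceil_index_bounds(2)[of a "n \<theta>"] assms by auto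
    then have "0 < X1_tail \<theta> (n \<theta>) (ceil_index a (n \<theta>))" "X1_tail \<theta> (n \<theta>) (ceil_index a (n \<theta>)) \<le> 1"
      using elim X1_tail_pos X1_tail_le_1 by auto
    then show ?case using elim by (simp add: divide_nonpos_pos)
  qed
  then have "- J a \<le> 0" by (intro tendsto_upperbound[OF tail_limit[OF assms]]) simp_all
  then show ?thesis by simp
qed

lemma rate_mono:
  assumes "a \<in> {0..1}" "b \<in> {0..1}" "a \<le> b"
  shows "J a \<le> J b"
proof -
  have "eventually (\<lambda>\<theta>. tail_rate b \<theta> \<le> tail_rate a \<theta>) at_top"
    using eventually_admissible
  proof eventually_elim
    case (elim \<theta>)
    then have "1 \<le> ceil_index a (n \<theta>)" "ceil_index a (n \<theta>) \<le> ceil_index b (n \<theta>)"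
      "ceil_index b (n \<theta>) \<le> n \<theta>"
      using ceil_index_bounds[of a "n \<theta>"] ceil_index_bounds[of b "n \<theta>"] ceil_index_mono assms by auto
    then have "0 < X1_tail \<theta> (n \<theta>) (ceil_index b (n \<theta>))"
      "X1_tail \<theta> (n \<theta>) (ceil_index b (n \<theta>)) \<le> X1_tail \<theta> (n \<theta>) (ceil_index a (n \<theta>))"
      using elim X1_tail_pos X1_tail_antimono by auto
    then show ?case using elim by (simp add: divide_right_mono)
  qed
  then have "- J b \<le> - J a" by (intro tendsto_le[OF _ tail_limit tail_limit]) (use assms in auto)
  then show ?thesis by simp
qed

lemma ldp_upper_bound:
  assumes "closed F"
  shows "Limsup at_top (\<lambda>\<theta>. log_scaled (\<gamma> \<theta>) (scaled_law \<theta> (n \<theta>) (F \<inter> {0..1})))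
    \<le> - (INF x\<in>F \<inter> {0..1}. J x)"
proof (cases "F \<inter> {0..1} = {}")
  case True
  then have "(\<lambda>\<theta>. log_scaled (\<gamma> \<theta>) (scaled_law \<theta> (n \<theta>) (F \<inter> {0..1}))) = (\<lambda>_. -\<infinity>)"
    by (simp add: log_scaled_def scaled_law_def)
  then show ?thesis by (simp add: Limsup_const)
next
  case False
  define S where "S = F \<inter> {0..1}"
  have "bdd_below S" unfolding S_def by (rule bdd_belowI[of _ 0]) auto
  moreover have "closed S" unfolding S_def using assms by (intro closed_Int) auto
  ultimately have a: "Inf S \<in> S" "Inf S \<in> {0..1}" "\<forall>x\<in>S. Inf S \<le> x"
    using closed_contains_Inf[of S] False cInf_lower[of _ S] unfolding S_def by auto
  have "(INF x\<in>S. J x) = J (Inf S)"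
    using a rate_mono unfolding S_def by (intro antisym INF_lower INF_greatest) auto
  moreover have "eventually (\<lambda>\<theta>. log_scaled (\<gamma> \<theta>) (scaled_law \<theta> (n \<theta>) S) \<le> tail_rate (Inf S) \<theta>) at_top"
    using eventually_admissible
  proof eventually_elim
    case (elim \<theta>)
    then have "ceil_index (Inf S) (n \<theta>) \<le> n \<theta>" using ceil_index_bounds(2) a by auto
    then show ?case
      using elim a X1_tail_pos scaled_law_le_X1_tail[of \<theta> "n \<theta>" "Inf S" S]
      by (intro log_scaled_le_ln) auto
  qed
  then have "Limsup at_top (\<lambda>\<theta>. log_scaled (\<gamma> \<theta>) (scaled_law \<theta> (n \<theta>) S)) \<le> Limsup at_top (tail_rate (Inf S))"
    by (rule Limsup_mono)
  moreover have "Limsup at_top (tail_rate (Inf S)) = - J (Inf S)"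
    by (rule lim_imp_Limsup[OF _ tail_limit[OF a(2)]]) simp
  ultimately show ?thesis unfolding S_def by simp
qed

lemma ldp_lower_bound_at_1:
  assumes "1 \<in> G"
  shows "- J 1 \<le> Liminf at_top (\<lambda>\<theta>. log_scaled (\<gamma> \<theta>) (scaled_law \<theta> (n \<theta>) (G \<inter> {0..1})))"
proof -
  have "eventually (\<lambda>\<theta>. tail_rate 1 \<theta> \<le> log_scaled (\<gamma> \<theta>) (scaled_law \<theta> (n \<theta>) (G \<inter> {0..1}))) at_top"
    using eventually_admissible
  proof eventually_elim
    case (elim \<theta>)
    have "{1} \<subseteq> G \<inter> {0..1}" using assms by simp
    then have "X1_tail \<theta> (n \<theta>) (n \<theta>) \<le> scaled_law \<theta> (n \<theta>) (G \<inter> {0..1})"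
      using X1_tail_le_scaled_law_1 scaled_law_mono elim by (meson order_trans)
    then show ?case using elim X1_tail_pos ceil_index_1 by (simp add: ln_le_log_scaled)
  qed
  then have "Liminf at_top (tail_rate 1) \<le> Liminf at_top (\<lambda>\<theta>. log_scaled (\<gamma> \<theta>) (scaled_law \<theta> (n \<theta>) (G \<inter> {0..1})))"
    by (rule Liminf_mono)
  moreover have "Liminf at_top (tail_rate 1) = - J 1" by (rule lim_imp_Liminf[OF _ tail_limit]) simp_all
  ultimately show ?thesis by simp
qed

lemma ldp_lower_bound_below_1:
  assumes "open G" "x \<in> G" "0 \<le> x" "x < 1" "J x \<noteq> \<infinity>"
  shows "- J x \<le> Liminf at_top (\<lambda>\<theta>. log_scaled (\<gamma> \<theta>) (scaled_law \<theta> (n \<theta>) (G \<inter> {0..1})))"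
    (is "_ \<le> Liminf at_top ?P")
proof -
  have x: "x \<in> {0..1}" using assms by simp
  obtain r where r: "J x = ereal r" using assms rate_nonneg[OF x] by (cases "J x") auto
  obtain e where e: "e > 0" "ball x e \<subseteq> G" using assms open_contains_ball by blast
  define \<delta> where "\<delta> = min (e/2) (1 - x)"
  have \<delta>: "\<delta> > 0" "x + \<delta> \<le> 1" "\<delta> < e" using e assms unfolding \<delta>_def by auto
  then have "{x..<x + \<delta>} \<subseteq> ball x e" by (auto simp: dist_real_def)
  then have \<delta>_subset: "{x..<x + \<delta>} \<subseteq> G \<inter> {0..1}" using e \<delta> x by auto
  have "((\<lambda>\<theta>. ln (X1_tail \<theta> (n \<theta>) (ceil_index x (n \<theta>))) / \<gamma> \<theta> - ln 2 / \<gamma> \<theta>) \<longlongrightarrow> - r - 0) at_top"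
    using tail_limit[OF x] r
    by (intro tendsto_diff tendsto_divide_0[OF tendsto_const filterlim_at_top_imp_at_infinity[OF \<gamma>_at_top]])
      (simp add: lim_ereal)
  then have halved_limit:
    "((\<lambda>\<theta>. ereal ((ln (X1_tail \<theta> (n \<theta>) (ceil_index x (n \<theta>))) - ln 2) / \<gamma> \<theta>)) \<longlongrightarrow> - J x) at_top"
    using r by (simp add: lim_ereal diff_divide_distrib)
  have "eventually (\<lambda>\<theta>. 4 / \<delta> \<le> real (n \<theta>)) at_top"
    using filterlim_compose[OF filterlim_real_sequentially n_at_top] by (simp add: filterlim_at_top)
  then have "eventually (\<lambda>\<theta>. (\<theta> > 0 \<and> 1 \<le> n \<theta> \<and> \<gamma> \<theta> > 0) \<and> 4 / \<delta> \<le> real (n \<theta>) \<and> 4 / \<delta> \<le> \<theta>) at_top"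
    using eventually_admissible eventually_ge_at_top[of "4 / \<delta>"] by eventually_elim simp
  then have "eventually (\<lambda>\<theta>. ereal ((ln (X1_tail \<theta> (n \<theta>) (ceil_index x (n \<theta>))) - ln 2) / \<gamma> \<theta>) \<le> ?P \<theta>) at_top"
  proof eventually_elim
    case (elim \<theta>)
    then have "X1_tail \<theta> (n \<theta>) (ceil_index x (n \<theta>)) / 2 \<le> scaled_law \<theta> (n \<theta>) (G \<inter> {0..1})"
      using half_X1_tail_le_scaled_law[of \<theta> "n \<theta>" x \<delta>] scaled_law_mono[OF _ \<delta>_subset, of \<theta> "n \<theta>"] x \<delta>
      by auto
    moreover have pos: "X1_tail \<theta> (n \<theta>) (ceil_index x (n \<theta>)) > 0"
      using elim X1_tail_pos ceil_index_bounds(2)[of x "n \<theta>"] x by auto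
    ultimately have "ereal (ln (X1_tail \<theta> (n \<theta>) (ceil_index x (n \<theta>)) / 2) / \<gamma> \<theta>) \<le> ?P \<theta>"
      using elim by (intro ln_le_log_scaled) auto
    then show ?case using pos by (simp add: ln_div)
  qed
  then have "Liminf at_top (\<lambda>\<theta>. ereal ((ln (X1_tail \<theta> (n \<theta>) (ceil_index x (n \<theta>))) - ln 2) / \<gamma> \<theta>))
      \<le> Liminf at_top ?P"
    by (rule Liminf_mono)
  moreover have "Liminf at_top (\<lambda>\<theta>. ereal ((ln (X1_tail \<theta> (n \<theta>) (ceil_index x (n \<theta>))) - ln 2) / \<gamma> \<theta>)) = - J x"
    by (rule lim_imp_Liminf[OF _ halved_limit]) simp
  ultimately show ?thesis by simp
qed

lemma ldp_lower_bound:
  assumes "open G"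
  shows "- (INF x\<in>G \<inter> {0..1}. J x) \<le> Liminf at_top (\<lambda>\<theta>. log_scaled (\<gamma> \<theta>) (scaled_law \<theta> (n \<theta>) (G \<inter> {0..1})))"
    (is "_ \<le> ?L")
proof -
  have "- ?L \<le> J x" if x: "x \<in> G \<inter> {0..1}" for x
  proof -
    consider "J x = \<infinity>" | "x = 1" | "x < 1" "J x \<noteq> \<infinity>" using x by force
    then have "- J x \<le> ?L"
    proof cases
      case 2
      then show ?thesis using ldp_lower_bound_at_1 x by simp
    next
      case 3
      then show ?thesis using ldp_lower_bound_below_1[OF assms] x by simp
    qed simp
    then show ?thesis by (simp add: ereal_uminus_le_reorder)
  qed
  then show ?thesis by (subst ereal_uminus_le_reorder) (rule INF_greatest)
qed

lemma LDP01_scaled_law: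
  assumes "\<And>b. closed {x\<in>{0..1}. J x \<le> b}"
  shows "LDP01 (\<lambda>\<theta>. scaled_law \<theta> (n \<theta>)) \<gamma> J"
  unfolding LDP01_def using rate_nonneg assms ldp_upper_bound ldp_lower_bound by blast

end

lemma continuous_on_xlogx: "continuous_on {0..} xlogx"
proof -
  have "continuous (at x within {0..}) (\<lambda>t::real. t * ln t)" if "x \<in> {0..}" for x
  proof (cases "x = 0")
    case True
    have "((\<lambda>t::real. t * ln t) \<longlongrightarrow> 0) (at_right 0)" by real_asymp
    then show ?thesis using True by (simp add: continuous_within at_within_Ici_at_right)
  next
    case False
    then have "isCont (\<lambda>t::real. t * ln t) x" using that by (intro continuous_intros) auto
    then show ?thesis by (rule continuous_at_imp_continuous_at_within)
  qed
  then have "continuous_on {0..} (\<lambda>t::real. t * ln t)" by (simp add: continuous_on_eq_continuous_within)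
  moreover have "xlogx = (\<lambda>t. t * ln t)" by (auto simp: xlogx_def)
  ultimately show ?thesis by metis
qed

lemma tendsto_xlogx:
  assumes "(g \<longlongrightarrow> L) F" "L \<ge> 0" "eventually (\<lambda>x. g x \<ge> 0) F"
  shows "((\<lambda>x. xlogx (g x)) \<longlongrightarrow> xlogx L) F"
  by (rule continuous_on_tendsto_compose[OF continuous_on_xlogx assms(1)]) (use assms in auto)

definition ln_primitive :: "real \<Rightarrow> real" where
  "ln_primitive y = xlogx y - y"

lemma ln_primitive_scale:
  assumes "N > 0" "t \<ge> 0"
  shows "ln_primitive (N * t) = N * xlogx t - N * t + N * t * ln N"
  using assms by (cases "t = 0") (auto simp: ln_primitive_def xlogx_def ln_mult algebra_simps)

text \<open>The \<open>ln N\<close> and linear terms cancel because the coefficients of \<open>t\<^sub>i\<close> sum to zero.\<close>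

lemma ln_primitive_four_scale:
  assumes "N > 0" "t1 \<ge> 0" "t2 \<ge> 0" "t3 \<ge> 0" "t4 \<ge> 0" "t1 - t2 - t3 + t4 = 0"
  shows "ln_primitive (N * t1) - ln_primitive (N * t2) - ln_primitive (N * t3) + ln_primitive (N * t4)
     = N * (xlogx t1 - xlogx t2 - xlogx t3 + xlogx t4)"
proof -
  have "ln_primitive (N * t1) - ln_primitive (N * t2) - ln_primitive (N * t3) + ln_primitive (N * t4)
      = N * (xlogx t1 - xlogx t2 - xlogx t3 + xlogx t4) + N * (ln N - 1) * (t1 - t2 - t3 + t4)"
    using assms(1-5) by (simp add: ln_primitive_scale algebra_simps)
  then show ?thesis using assms(6) by simp
qed

lemma ln_le_ln_primitive_diff:
  assumes "y > 0"
  shows "ln y \<le> ln_primitive (y + 1) - ln_primitive y"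
proof -
  have "ln (y / (y + 1)) \<le> y / (y + 1) - 1" using assms by (intro ln_le_minus_one) simp
  then have "(y + 1) * (ln y - ln (y + 1)) \<le> -1" using assms by (simp add: ln_div field_simps)
  then show ?thesis using assms by (simp add: ln_primitive_def xlogx_def algebra_simps)
qed

lemma ln_primitive_diff_le_ln:
  assumes "y \<ge> 1"
  shows "ln_primitive y - ln_primitive (y - 1) \<le> ln y"
proof (cases "y = 1")
  case False
  then have y: "y > 1" using assms by simp
  have "ln (y / (y - 1)) \<le> y / (y - 1) - 1" using y by (intro ln_le_minus_one) simp
  then have "(y - 1) * (ln y - ln (y - 1)) \<le> 1" using y by (simp add: ln_div field_simps)
  then show ?thesis using y by (simp add: ln_primitive_def xlogx_def algebra_simps)
qed (simp add: ln_primitive_def xlogx_def)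

lemma sum_le_telescope:
  assumes "\<And>j. 1 \<le> j \<Longrightarrow> j < K \<Longrightarrow> f j \<le> g j - g (Suc j)" "1 \<le> K"
  shows "(\<Sum>j\<in>{1..<K}. f j) \<le> g 1 - (g K :: real)"
  using assms(2,1)
proof (induction K rule: dec_induct)
  case (step k)
  have "(\<Sum>j\<in>{1..<Suc k}. f j) = (\<Sum>j\<in>{1..<k}. f j) + f k" using step by simp
  also have "\<dots> \<le> (g 1 - g k) + (g k - g (Suc k))" using step by (intro add_mono) auto
  finally show ?case by simp
qed simp

lemma telescope_le_sum:
  assumes "\<And>j. 1 \<le> j \<Longrightarrow> j < K \<Longrightarrow> g j - g (Suc j) \<le> f j" "1 \<le> K"
  shows "g 1 - (g K :: real) \<le> (\<Sum>j\<in>{1..<K}. f j)"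
proof -
  have "(\<Sum>j\<in>{1..<K}. - f j) \<le> (- g 1) - (- g K)"
    by (rule sum_le_telescope[OF _ assms(2)]) (use assms(1) in fastforce)
  then show ?thesis by (simp add: sum_negf)
qed

lemma sum_ln_le_ln_primitive:
  assumes "A - real K + 1 > 0" "1 \<le> K"
  shows "(\<Sum>j\<in>{1..<K}. ln (A - real j)) \<le> ln_primitive A - ln_primitive (A - real K + 1)"
  using sum_le_telescope[of K "\<lambda>j. ln (A - real j)" "\<lambda>j. ln_primitive (A - real j + 1)"]
    ln_le_ln_primitive_diff[of "A - real _"] assms
  by (simp add: algebra_simps)

lemma ln_primitive_le_sum_ln:
  assumes "A \<ge> real K" "1 \<le> K"
  shows "ln_primitive (A - 1) - ln_primitive (A - real K) \<le> (\<Sum>j\<in>{1..<K}. ln (A - real j))"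
  using telescope_le_sum[of K "\<lambda>j. ln_primitive (A - real j)" "\<lambda>j. ln (A - real j)"]
    ln_primitive_diff_le_ln[of "A - real _"] assms
  by (simp add: algebra_simps)

lemma ln_X1_tail_le_xlogx:
  assumes "\<theta> > 0" "1 \<le> K" "K \<le> N"
  defines "u \<equiv> real K / real N" and "v \<equiv> 1 / real N" and "q \<equiv> \<theta> / real N"
  shows "ln (X1_tail \<theta> N K) / \<theta> \<le> (xlogx 1 - xlogx (1 - u + v) - xlogx (q + 1 - v) + xlogx (q + 1 - u)) / q"
proof -
  have N: "real N > 0" using assms by simp
  have u: "u \<le> 1" and v: "0 < v" "v \<le> 1" and q: "q > 0"
    using assms N unfolding u_def v_def q_def by auto
  have scaled: "real N * 1 = real N" "real N * (1 - u + v) = real N - real K + 1"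
    "real N * (q + 1 - v) = \<theta> + real N - 1" "real N * (q + 1 - u) = \<theta> + real N - real K"
    unfolding u_def v_def q_def using N by (simp_all add: field_simps)
  have "ln (X1_tail \<theta> N K)
      \<le> ln_primitive (real N * 1) - ln_primitive (real N * (1 - u + v))
        - ln_primitive (real N * (q + 1 - v)) + ln_primitive (real N * (q + 1 - u))"
    unfolding ln_X1_tail[OF assms(1,3)] scaled
    using sum_ln_le_ln_primitive[of "real N" K] ln_primitive_le_sum_ln[of K "\<theta> + real N"] assms
    by (simp add: algebra_simps)
  also have "\<dots> = real N * (xlogx 1 - xlogx (1 - u + v) - xlogx (q + 1 - v) + xlogx (q + 1 - u))"
    by (rule ln_primitive_four_scale) (use N u v q in auto)
  finally show ?thesis
    using assms(1) N unfolding q_def by (simp add: field_simps divide_right_mono)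
qed

lemma xlogx_le_ln_X1_tail:
  assumes "\<theta> > 0" "1 \<le> K" "K \<le> N"
  defines "u \<equiv> real K / real N" and "v \<equiv> 1 / real N" and "q \<equiv> \<theta> / real N"
  shows "(xlogx (1 - v) - xlogx (1 - u) - xlogx (q + 1) + xlogx (q + 1 - u + v)) / q \<le> ln (X1_tail \<theta> N K) / \<theta>"
proof -
  have N: "real N > 0" using assms by simp
  have u: "u \<le> 1" and v: "0 < v" "v \<le> 1" and q: "q > 0"
    using assms N unfolding u_def v_def q_def by auto
  have scaled: "real N * (1 - v) = real N - 1" "real N * (1 - u) = real N - real K"
    "real N * (q + 1) = \<theta> + real N" "real N * (q + 1 - u + v) = \<theta> + real N - real K + 1"
    unfolding u_def v_def q_def using N by (simp_all add: field_simps)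
  have "real N * (xlogx (1 - v) - xlogx (1 - u) - xlogx (q + 1) + xlogx (q + 1 - u + v))
      = ln_primitive (real N * (1 - v)) - ln_primitive (real N * (1 - u))
        - ln_primitive (real N * (q + 1)) + ln_primitive (real N * (q + 1 - u + v))"
    by (rule ln_primitive_four_scale[symmetric]) (use N u v q in auto)
  also have "\<dots> \<le> ln (X1_tail \<theta> N K)"
    unfolding ln_X1_tail[OF assms(1,3)] scaled
    using ln_primitive_le_sum_ln[of K "real N"] sum_ln_le_ln_primitive[of "\<theta> + real N" K] assms
    by (simp add: algebra_simps)
  finally have "real N * (xlogx (1 - v) - xlogx (1 - u) - xlogx (q + 1) + xlogx (q + 1 - u + v))
      \<le> ln (X1_tail \<theta> N K)" .
  then have "real N * (xlogx (1 - v) - xlogx (1 - u) - xlogx (q + 1) + xlogx (q + 1 - u + v)) / \<theta>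
      \<le> ln (X1_tail \<theta> N K) / \<theta>"
    using assms(1) by (intro divide_right_mono) auto
  then show ?thesis using N unfolding q_def by (simp add: field_simps)
qed

lemma tendsto_inverse_of_nat_at_top:
  "filterlim (n :: real \<Rightarrow> nat) at_top at_top \<Longrightarrow> ((\<lambda>\<theta>. 1 / real (n \<theta>)) \<longlongrightarrow> 0) at_top"
  by (intro tendsto_divide_0[OF tendsto_const] filterlim_at_top_imp_at_infinity
      filterlim_compose[OF filterlim_real_sequentially])

lemma tendsto_ceil_index_ratio:
  assumes n: "filterlim (n :: real \<Rightarrow> nat) at_top at_top" and a: "0 \<le> a" "a \<le> 1"
  shows "((\<lambda>\<theta>. real (ceil_index a (n \<theta>)) / real (n \<theta>)) \<longlongrightarrow> a) at_top"
proof (rule tendsto_sandwich[where f = "\<lambda>_. a" and h = "\<lambda>\<theta>. a + 1 / real (n \<theta>)"])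
  have n1: "eventually (\<lambda>\<theta>. 1 \<le> n \<theta>) at_top" using n by (simp add: filterlim_at_top)
  then show "eventually (\<lambda>\<theta>. a \<le> real (ceil_index a (n \<theta>)) / real (n \<theta>)) at_top"
    by eventually_elim (use ceil_index_bounds(3)[OF a] in \<open>auto simp: field_simps\<close>)
  from n1 show "eventually (\<lambda>\<theta>. real (ceil_index a (n \<theta>)) / real (n \<theta>) \<le> a + 1 / real (n \<theta>)) at_top"
    by eventually_elim (use ceil_index_bounds(4)[OF a] in \<open>auto simp: field_simps\<close>)
  show "((\<lambda>\<theta>. a + 1 / real (n \<theta>)) \<longlongrightarrow> a) at_top"
    using tendsto_add[OF tendsto_const tendsto_inverse_of_nat_at_top[OF n], of a] by simp
qed simp

lemma tail_limit_case_C: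
  assumes n: "filterlim (n :: real \<Rightarrow> nat) at_top at_top"
    and c: "c > 0" "((\<lambda>\<theta>. \<theta> / real (n \<theta>)) \<longlongrightarrow> c) at_top" and a: "0 \<le> a" "a \<le> 1"
  shows "((\<lambda>\<theta>. ln (X1_tail \<theta> (n \<theta>) (ceil_index a (n \<theta>))) / \<theta>)
    \<longlongrightarrow> (xlogx (c + 1 - a) - xlogx (1 - a) - xlogx (c + 1)) / c) at_top"
proof -
  define u where "u = (\<lambda>\<theta>. real (ceil_index a (n \<theta>)) / real (n \<theta>))"
  define v where "v = (\<lambda>\<theta>. 1 / real (n \<theta>))"
  define q where "q = (\<lambda>\<theta>. \<theta> / real (n \<theta>))"
  have u: "(u \<longlongrightarrow> a) at_top" unfolding u_def by (rule tendsto_ceil_index_ratio[OF n a])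
  have v: "(v \<longlongrightarrow> 0) at_top" unfolding v_def by (rule tendsto_inverse_of_nat_at_top[OF n])
  have q: "(q \<longlongrightarrow> c) at_top" unfolding q_def by (rule c)
  have admissible: "eventually (\<lambda>\<theta>. \<theta> > 0 \<and> 1 \<le> n \<theta>) at_top"
    using n eventually_gt_at_top[of "0::real"] by (auto simp: filterlim_at_top intro: eventually_conj)
  then have "eventually (\<lambda>\<theta>. u \<theta> \<le> 1 \<and> 0 \<le> v \<theta> \<and> v \<theta> \<le> 1 \<and> 0 < q \<theta>) at_top"
    by eventually_elim (use ceil_index_bounds(2)[OF a] in \<open>auto simp: u_def v_def q_def field_simps\<close>)
  then have nonneg: "eventually (\<lambda>\<theta>. 0 \<le> 1 - u \<theta> + v \<theta> \<and> 0 \<le> q \<theta> + 1 - v \<theta> \<and> 0 \<le> q \<theta> + 1 - u \<theta>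
      \<and> 0 \<le> 1 - v \<theta> \<and> 0 \<le> 1 - u \<theta> \<and> 0 \<le> q \<theta> + 1 \<and> 0 \<le> q \<theta> + 1 - u \<theta> + v \<theta>) at_top"
    by eventually_elim auto
  have "xlogx 1 = 0" by (simp add: xlogx_def)
  then have limit: "(xlogx 1 - xlogx (1 - a + 0) - xlogx (c + 1 - 0) + xlogx (c + 1 - a)) / c
      = (xlogx (c + 1 - a) - xlogx (1 - a) - xlogx (c + 1)) / c"
    "(xlogx (1 - 0) - xlogx (1 - a) - xlogx (c + 1) + xlogx (c + 1 - a + 0)) / c
      = (xlogx (c + 1 - a) - xlogx (1 - a) - xlogx (c + 1)) / c"
    by simp_all
  show ?thesis
  proof (rule tendsto_sandwich)
    show "((\<lambda>\<theta>. (xlogx (1 - v \<theta>) - xlogx (1 - u \<theta>) - xlogx (q \<theta> + 1) + xlogx (q \<theta> + 1 - u \<theta> + v \<theta>)) / q \<theta>)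
        \<longlongrightarrow> (xlogx (c + 1 - a) - xlogx (1 - a) - xlogx (c + 1)) / c) at_top"
      unfolding limit(2)[symmetric] using a c nonneg
      by (intro tendsto_intros tendsto_xlogx u v q) (auto elim: eventually_mono)
    show "((\<lambda>\<theta>. (xlogx 1 - xlogx (1 - u \<theta> + v \<theta>) - xlogx (q \<theta> + 1 - v \<theta>) + xlogx (q \<theta> + 1 - u \<theta>)) / q \<theta>)
        \<longlongrightarrow> (xlogx (c + 1 - a) - xlogx (1 - a) - xlogx (c + 1)) / c) at_top"
      unfolding limit(1)[symmetric] using a c nonneg
      by (intro tendsto_intros tendsto_xlogx u v q) (auto elim: eventually_mono)
    show "eventually (\<lambda>\<theta>. (xlogx (1 - v \<theta>) - xlogx (1 - u \<theta>) - xlogx (q \<theta> + 1) + xlogx (q \<theta> + 1 - u \<theta> + v \<theta>)) / q \<theta>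
        \<le> ln (X1_tail \<theta> (n \<theta>) (ceil_index a (n \<theta>))) / \<theta>) at_top"
      using admissible unfolding u_def v_def q_def
      by eventually_elim (intro xlogx_le_ln_X1_tail, use ceil_index_bounds[OF a] in auto)
    show "eventually (\<lambda>\<theta>. ln (X1_tail \<theta> (n \<theta>) (ceil_index a (n \<theta>))) / \<theta>
        \<le> (xlogx 1 - xlogx (1 - u \<theta> + v \<theta>) - xlogx (q \<theta> + 1 - v \<theta>) + xlogx (q \<theta> + 1 - u \<theta>)) / q \<theta>) at_top"
      using admissible unfolding u_def v_def q_def
      by eventually_elim (intro ln_X1_tail_le_xlogx, use ceil_index_bounds[OF a] in auto)
  qed
qed

lemma ln_X1_tail_le_ln_ratio:
  assumes "\<theta> > 0" "1 \<le> K" "K \<le> N"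
  defines "u \<equiv> real K / real N" and "v \<equiv> 1 / real N" and "q \<equiv> \<theta> / real N"
  shows "ln (X1_tail \<theta> N K) / \<theta> \<le> ln (1 - (u - v) / (q + 1))"
proof -
  have "(\<Sum>j\<in>{1..<K}. ln (real N - real j) - ln (\<theta> + real N - real j))
     \<le> - \<theta> * ln (\<theta> + real N - real (1::nat) + 1) - - \<theta> * ln (\<theta> + real N - real K + 1)"
  proof (rule sum_le_telescope[OF _ assms(2)])
    fix j assume j: "1 \<le> j" "j < K"
    define y where "y = real N - real j"
    have y: "y > 0" using j assms unfolding y_def by simp
    have "ln (y / (\<theta> + y)) \<le> y / (\<theta> + y) - 1" using y assms by (intro ln_le_minus_one) simp
    then have "ln y - ln (\<theta> + y) \<le> - \<theta> / (\<theta> + y)" using y assms by (simp add: ln_div field_simps)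
    moreover have "ln ((\<theta> + y + 1) / (\<theta> + y)) \<le> (\<theta> + y + 1) / (\<theta> + y) - 1"
      using y assms by (intro ln_le_minus_one) simp
    then have "ln (\<theta> + y + 1) - ln (\<theta> + y) \<le> 1 / (\<theta> + y)" using y assms by (simp add: ln_div field_simps)
    then have "\<theta> * (ln (\<theta> + y + 1) - ln (\<theta> + y)) \<le> \<theta> / (\<theta> + y)"
      using mult_left_mono[of _ _ \<theta>] assms by fastforce
    ultimately show "ln (real N - real j) - ln (\<theta> + real N - real j)
        \<le> - \<theta> * ln (\<theta> + real N - real j + 1) - - \<theta> * ln (\<theta> + real N - real (Suc j) + 1)"
      unfolding y_def by (simp add: algebra_simps)
  qed
  then have "ln (X1_tail \<theta> N K) / \<theta> \<le> ln (\<theta> + real N - real K + 1) - ln (\<theta> + real N)"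
    unfolding ln_X1_tail[OF assms(1,3)] using assms(1) by (simp add: sum_subtractf field_simps)
  also have "\<dots> = ln ((\<theta> + real N - real K + 1) / (\<theta> + real N))"
    using assms by (simp add: ln_div)
  also have "(\<theta> + real N - real K + 1) / (\<theta> + real N) = 1 - (u - v) / (q + 1)"
  proof -
    have N: "real N > 0" "\<theta> + real N > 0" using assms by auto
    have "u - v = (real K - 1) / real N" unfolding u_def v_def by (simp add: diff_divide_distrib)
    moreover have "q + 1 = (\<theta> + real N) / real N" unfolding q_def using N by (simp add: field_simps)
    ultimately have "(u - v) / (q + 1) = (real K - 1) / (\<theta> + real N)" using N by simp
    then show ?thesis using N by (simp add: field_simps)
  qed
  finally show ?thesis .
qed

lemma ln_ratio_le_ln_X1_tail:
  assumes "\<theta> > 0" "1 \<le> K" "K < N"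
  defines "u \<equiv> real K / real N" and "v \<equiv> 1 / real N"
  shows "ln ((1 - u) / (1 - v)) \<le> ln (X1_tail \<theta> N K) / \<theta>"
proof -
  have "- \<theta> * ln (real N - real (1::nat)) - - \<theta> * ln (real N - real K)
     \<le> (\<Sum>j\<in>{1..<K}. ln (real N - real j) - ln (\<theta> + real N - real j))"
  proof (rule telescope_le_sum[OF _ assms(2)])
    fix j assume j: "1 \<le> j" "j < K"
    define y where "y = real N - real j"
    have y: "y > 1" using j assms unfolding y_def by simp
    have "ln (1 + \<theta> / y) \<le> \<theta> / y" using y assms by (intro ln_add_one_self_le_self) simp
    moreover have "1 + \<theta> / y = (\<theta> + y) / y" using y by (simp add: field_simps)
    ultimately have "ln (\<theta> + y) - ln y \<le> \<theta> / y" using y assms by (simp add: ln_div)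
    moreover have "ln ((y - 1) / y) \<le> (y - 1) / y - 1" using y by (intro ln_le_minus_one) simp
    then have "1 / y \<le> ln y - ln (y - 1)" using y by (simp add: ln_div field_simps)
    then have "\<theta> / y \<le> \<theta> * (ln y - ln (y - 1))" using mult_left_mono[of _ _ \<theta>] assms by fastforce
    ultimately show "- \<theta> * ln (real N - real j) - - \<theta> * ln (real N - real (Suc j))
        \<le> ln (real N - real j) - ln (\<theta> + real N - real j)"
      unfolding y_def by (simp add: algebra_simps)
  qed
  then have "ln (real N - real K) - ln (real N - 1) \<le> ln (X1_tail \<theta> N K) / \<theta>"
    unfolding ln_X1_tail[OF assms(1) less_imp_le[OF assms(3)]] using assms(1)
    by (simp add: sum_subtractf field_simps)
  moreover have "ln (real N - real K) - ln (real N - 1) = ln ((real N - real K) / (real N - 1))"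
    using assms by (simp add: ln_div)
  moreover have "(real N - real K) / (real N - 1) = (1 - u) / (1 - v)"
    using assms unfolding u_def v_def by (simp add: field_simps)
  ultimately show ?thesis by simp
qed

lemma tail_limit_case_D:
  assumes n: "filterlim (n :: real \<Rightarrow> nat) at_top at_top"
    and q: "((\<lambda>\<theta>. \<theta> / real (n \<theta>)) \<longlongrightarrow> 0) at_top" and a: "0 \<le> a" "a < 1"
  shows "((\<lambda>\<theta>. ln (X1_tail \<theta> (n \<theta>) (ceil_index a (n \<theta>))) / \<theta>) \<longlongrightarrow> ln (1 - a)) at_top"
proof -
  define u where "u = (\<lambda>\<theta>. real (ceil_index a (n \<theta>)) / real (n \<theta>))"
  define v where "v = (\<lambda>\<theta>. 1 / real (n \<theta>))"
  have u: "(u \<longlongrightarrow> a) at_top" unfolding u_def by (rule tendsto_ceil_index_ratio) (use n a in auto)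
  have v: "(v \<longlongrightarrow> 0) at_top" unfolding v_def by (rule tendsto_inverse_of_nat_at_top[OF n])
  have "eventually (\<lambda>\<theta>. 1 \<le> n \<theta>) at_top" using n by (simp add: filterlim_at_top)
  then have "eventually (\<lambda>\<theta>. \<theta> > 0 \<and> 1 \<le> n \<theta> \<and> u \<theta> < 1) at_top"
    using order_tendstoD(2)[OF u a(2)] eventually_gt_at_top[of "0::real"] by eventually_elim simp
  then have admissible: "eventually (\<lambda>\<theta>. \<theta> > 0 \<and> 1 \<le> ceil_index a (n \<theta>) \<and> ceil_index a (n \<theta>) < n \<theta>) at_top"
  proof eventually_elim
    case (elim \<theta>)
    then have "ceil_index a (n \<theta>) < n \<theta>" by (auto simp: u_def divide_less_eq)
    then show ?case using elim ceil_index_bounds(1)[of a "n \<theta>"] a by simp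
  qed
  show ?thesis
  proof (rule tendsto_sandwich)
    show "eventually (\<lambda>\<theta>. ln ((1 - u \<theta>) / (1 - v \<theta>)) \<le> ln (X1_tail \<theta> (n \<theta>) (ceil_index a (n \<theta>))) / \<theta>) at_top"
      using admissible unfolding u_def v_def by eventually_elim (intro ln_ratio_le_ln_X1_tail, auto)
    show "eventually (\<lambda>\<theta>. ln (X1_tail \<theta> (n \<theta>) (ceil_index a (n \<theta>))) / \<theta>
        \<le> ln (1 - (u \<theta> - v \<theta>) / (\<theta> / real (n \<theta>) + 1))) at_top"
      using admissible unfolding u_def v_def by eventually_elim (intro ln_X1_tail_le_ln_ratio, auto)
    have "((\<lambda>\<theta>. (1 - u \<theta>) / (1 - v \<theta>)) \<longlongrightarrow> (1 - a) / (1 - 0)) at_top"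
      by (intro tendsto_intros u v) simp
    from tendsto_ln[OF this] a show "((\<lambda>\<theta>. ln ((1 - u \<theta>) / (1 - v \<theta>))) \<longlongrightarrow> ln (1 - a)) at_top"
      by simp
    have "((\<lambda>\<theta>. 1 - (u \<theta> - v \<theta>) / (\<theta> / real (n \<theta>) + 1)) \<longlongrightarrow> 1 - (a - 0) / (0 + 1)) at_top"
      by (intro tendsto_intros u v q) simp
    from tendsto_ln[OF this] a
    show "((\<lambda>\<theta>. ln (1 - (u \<theta> - v \<theta>) / (\<theta> / real (n \<theta>) + 1))) \<longlongrightarrow> ln (1 - a)) at_top"
      by simp
  qed
qed

lemma tail_limit_case_D_1:
  assumes n: "filterlim (n :: real \<Rightarrow> nat) at_top at_top"
    and q: "((\<lambda>\<theta>. \<theta> / real (n \<theta>)) \<longlongrightarrow> 0) at_top"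
  shows "filterlim (\<lambda>\<theta>. ln (X1_tail \<theta> (n \<theta>) (ceil_index 1 (n \<theta>))) / \<theta>) at_bot at_top"
proof (rule filterlim_at_bot_mono)
  define v where "v = (\<lambda>\<theta>. 1 / real (n \<theta>))"
  have v: "(v \<longlongrightarrow> 0) at_top" unfolding v_def by (rule tendsto_inverse_of_nat_at_top[OF n])
  have admissible: "eventually (\<lambda>\<theta>. \<theta> > 0 \<and> 1 \<le> n \<theta>) at_top"
    using n eventually_gt_at_top[of "0::real"] by (auto simp: filterlim_at_top intro: eventually_conj)
  have "((\<lambda>\<theta>. 1 - (1 - v \<theta>) / (\<theta> / real (n \<theta>) + 1)) \<longlongrightarrow> 1 - (1 - 0) / (0 + 1)) at_top"
    by (intro tendsto_intros v q) simp
  moreover have "eventually (\<lambda>\<theta>. 1 - (1 - v \<theta>) / (\<theta> / real (n \<theta>) + 1) > 0) at_top"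
    using admissible
  proof eventually_elim
    case (elim \<theta>)
    then have "0 < \<theta> / real (n \<theta>)" "0 < v \<theta>" by (auto simp: v_def)
    then show ?case by (simp add: divide_less_eq)
  qed
  ultimately have "filterlim (\<lambda>\<theta>. 1 - (1 - v \<theta>) / (\<theta> / real (n \<theta>) + 1)) (at_right 0) at_top"
    by (simp add: tendsto_imp_filterlim_at_right)
  then show "filterlim (\<lambda>\<theta>. ln (1 - (1 - v \<theta>) / (\<theta> / real (n \<theta>) + 1))) at_bot at_top"
    by (rule filterlim_compose[OF ln_at_0])
  show "eventually (\<lambda>\<theta>. ln (X1_tail \<theta> (n \<theta>) (ceil_index 1 (n \<theta>))) / \<theta>
      \<le> ln (1 - (1 - v \<theta>) / (\<theta> / real (n \<theta>) + 1))) at_top"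
    using admissible
  proof eventually_elim
    case (elim \<theta>)
    then show ?case
      using ln_X1_tail_le_ln_ratio[of \<theta> "n \<theta>" "n \<theta>"] ceil_index_1 by (simp add: v_def)
  qed
qed

lemma ln_X1_tail_le_linear:
  assumes "\<theta> > 0" "1 \<le> K" "K \<le> N" "real N < \<theta>"
  shows "ln (X1_tail \<theta> N K) / (real N * ln (\<theta> / real N)) \<le> - ((real K - 1) / real N)"
proof -
  have "(\<Sum>j\<in>{1..<K}. ln (real N - real j) - ln (\<theta> + real N - real j)) \<le> real (card {1..<K}) * - ln (\<theta> / real N)"
  proof (rule sum_bounded_above)
    fix j assume j: "j \<in> {1..<K}"
    have y: "real N - real j > 0" using j assms by simp
    have "real N * real j \<le> real N * real N" using y by (intro mult_left_mono) auto
    moreover have "0 \<le> \<theta> * real j" using assms(1) by simp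
    moreover have "real N * (\<theta> + real N - real j) - (real N - real j) * \<theta>
        = real N * real N - real N * real j + \<theta> * real j"
      by (simp add: algebra_simps)
    ultimately have "(real N - real j) * \<theta> \<le> real N * (\<theta> + real N - real j)" by linarith
    then have "(real N - real j) / (\<theta> + real N - real j) \<le> real N / \<theta>"
      using y assms(1) by (simp add: divide_simps)
    then have "ln ((real N - real j) / (\<theta> + real N - real j)) \<le> ln (real N / \<theta>)"
      using y assms(1) by simp
    then show "ln (real N - real j) - ln (\<theta> + real N - real j) \<le> - ln (\<theta> / real N)"
      using y assms by (simp add: ln_div)
  qed
  then have "ln (X1_tail \<theta> N K) \<le> (real K - 1) * - ln (\<theta> / real N)"
    using assms unfolding ln_X1_tail[OF assms(1,3)] by (simp add: sum_subtractf)
  also have "\<dots> = - ((real K - 1) / real N) * (real N * ln (\<theta> / real N))"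
    using assms by simp
  finally show ?thesis using assms by (subst pos_divide_le_eq) auto
qed

lemma linear_le_ln_X1_tail:
  assumes "\<theta> > 0" "1 \<le> K" "K \<le> N" "2 \<le> N"
  shows "- (real K - 1) * (ln ((\<theta> + real N) / (real N - 1)) + 1) \<le> ln (X1_tail \<theta> N K)"
proof -
  have xlogx_K: "xlogx (real N - real K) \<le> (real N - real K) * ln (real N - 1)"
  proof (cases "K = N")
    case False
    then have "ln (real N - real K) \<le> ln (real N - 1)" using assms by simp
    then show ?thesis using assms by (simp add: xlogx_def mult_left_mono)
  qed (simp add: xlogx_def)
  have "xlogx (real N - 1) = (real N - 1) * ln (real N - 1)" by (simp add: xlogx_def)
  moreover have "(real K - 1) * ln (real N - 1) - (real K - 1)
      = ((real N - 1) * ln (real N - 1) - (real N - 1)) - ((real N - real K) * ln (real N - 1) - (real N - real K))"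
    by (simp add: algebra_simps)
  ultimately have "(real K - 1) * ln (real N - 1) - (real K - 1)
      \<le> ln_primitive (real N - 1) - ln_primitive (real N - real K)"
    using xlogx_K unfolding ln_primitive_def by linarith
  also have "\<dots> \<le> (\<Sum>j\<in>{1..<K}. ln (real N - real j))"
    by (rule ln_primitive_le_sum_ln) (use assms in auto)
  finally have numerator: "(real K - 1) * ln (real N - 1) - (real K - 1) \<le> (\<Sum>j\<in>{1..<K}. ln (real N - real j))" .
  have "(\<Sum>j\<in>{1..<K}. ln (\<theta> + real N - real j)) \<le> real (card {1..<K}) * ln (\<theta> + real N)"
    by (rule sum_bounded_above) (use assms in auto)
  then have denominator: "(\<Sum>j\<in>{1..<K}. ln (\<theta> + real N - real j)) \<le> (real K - 1) * ln (\<theta> + real N)"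
    using assms by simp
  have ln_ratio: "ln ((\<theta> + real N) / (real N - 1)) = ln (\<theta> + real N) - ln (real N - 1)"
    using assms by (simp add: ln_div)
  have "- (real K - 1) * (ln ((\<theta> + real N) / (real N - 1)) + 1)
      = (real K - 1) * ln (real N - 1) - (real K - 1) - (real K - 1) * ln (\<theta> + real N)"
    unfolding ln_ratio by (simp add: algebra_simps)
  then show ?thesis
    unfolding ln_X1_tail[OF assms(1,3)] using numerator denominator by linarith
qed

lemma linear_le_ln_X1_tail_normalized:
  assumes "\<theta> > 0" "1 \<le> K" "K \<le> N" "2 \<le> N" "real N < \<theta>"
  shows "- ((real K - 1) / real N) * (1 + (ln ((1 + 1 / (\<theta> / real N)) / (1 - 1 / real N)) + 1) / ln (\<theta> / real N))
    \<le> ln (X1_tail \<theta> N K) / (real N * ln (\<theta> / real N))"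
proof -
  define r where "r = (1 + 1 / (\<theta> / real N)) / (1 - 1 / real N)"
  have pos: "0 < ln (\<theta> / real N)" "real N > 1" using assms by auto
  have split: "(\<theta> + real N) / (real N - 1) = \<theta> / real N * r"
    using pos assms(1) by (simp add: r_def field_simps)
  have "r > 0" using pos assms(1) unfolding r_def by (intro divide_pos_pos add_pos_nonneg) auto
  then have "ln (\<theta> / real N * r) = ln (\<theta> / real N) + ln r"
    using assms by (intro ln_mult_pos) auto
  then have "ln ((\<theta> + real N) / (real N - 1)) = ln (\<theta> / real N) + ln r"
    unfolding split .
  then have "- ((real K - 1) / real N) * (1 + (ln r + 1) / ln (\<theta> / real N)) * (real N * ln (\<theta> / real N))
      = - (real K - 1) * (ln ((\<theta> + real N) / (real N - 1)) + 1)"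
    using pos by (simp add: field_simps)
  also have "\<dots> \<le> ln (X1_tail \<theta> N K)" by (rule linear_le_ln_X1_tail) (use assms in auto)
  finally show ?thesis using pos unfolding r_def by (subst pos_le_divide_eq) auto
qed

lemma tail_limit_case_B:
  assumes n: "filterlim (n :: real \<Rightarrow> nat) at_top at_top"
    and q: "filterlim (\<lambda>\<theta>. \<theta> / real (n \<theta>)) at_top at_top" and a: "0 \<le> a" "a \<le> 1"
  shows "((\<lambda>\<theta>. ln (X1_tail \<theta> (n \<theta>) (ceil_index a (n \<theta>))) / (real (n \<theta>) * ln (\<theta> / real (n \<theta>))))
    \<longlongrightarrow> - a) at_top"
proof -
  define u where "u = (\<lambda>\<theta>. (real (ceil_index a (n \<theta>)) - 1) / real (n \<theta>))"
  define \<epsilon> where "\<epsilon> = (\<lambda>\<theta>. (ln ((1 + 1 / (\<theta> / real (n \<theta>))) / (1 - 1 / real (n \<theta>))) + 1) / ln (\<theta> / real (n \<theta>)))"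
  have u: "(u \<longlongrightarrow> a) at_top"
    using tendsto_diff[OF tendsto_ceil_index_ratio[OF n a] tendsto_inverse_of_nat_at_top[OF n]]
    by (simp add: u_def diff_divide_distrib)
  have "((\<lambda>\<theta>. ln ((1 + 1 / (\<theta> / real (n \<theta>))) / (1 - 1 / real (n \<theta>))) + 1) \<longlongrightarrow> ln ((1 + 0) / (1 - 0)) + 1) at_top"
    by (intro tendsto_intros tendsto_inverse_of_nat_at_top[OF n]
        tendsto_divide_0[OF tendsto_const filterlim_at_top_imp_at_infinity[OF q]]) auto
  then have \<epsilon>: "(\<epsilon> \<longlongrightarrow> 0) at_top"
    unfolding \<epsilon>_def
    by (rule tendsto_divide_0[OF _ filterlim_at_top_imp_at_infinity[OF filterlim_compose[OF ln_at_top q]]])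
  have "eventually (\<lambda>\<theta>. 2 \<le> n \<theta>) at_top" "eventually (\<lambda>\<theta>. 1 < \<theta> / real (n \<theta>)) at_top"
    using n q[unfolded filterlim_at_top_dense] by (auto simp: filterlim_at_top)
  then have admissible: "eventually (\<lambda>\<theta>. \<theta> > 0 \<and> 2 \<le> n \<theta> \<and> real (n \<theta>) < \<theta>) at_top"
    using eventually_gt_at_top[of "0::real"] by eventually_elim auto
  show ?thesis
  proof (rule tendsto_sandwich)
    show "eventually (\<lambda>\<theta>. - u \<theta> * (1 + \<epsilon> \<theta>) \<le> ln (X1_tail \<theta> (n \<theta>) (ceil_index a (n \<theta>)))
        / (real (n \<theta>) * ln (\<theta> / real (n \<theta>)))) at_top"
      using admissible
    proof eventually_elim
      case (elim \<theta>)
      show ?case unfolding u_def \<epsilon>_def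
        by (rule linear_le_ln_X1_tail_normalized) (use elim ceil_index_bounds[OF a, of "n \<theta>"] in auto)
    qed
    show "eventually (\<lambda>\<theta>. ln (X1_tail \<theta> (n \<theta>) (ceil_index a (n \<theta>)))
        / (real (n \<theta>) * ln (\<theta> / real (n \<theta>))) \<le> - u \<theta>) at_top"
      using admissible
    proof eventually_elim
      case (elim \<theta>)
      show ?case unfolding u_def
        by (rule ln_X1_tail_le_linear) (use elim ceil_index_bounds[OF a, of "n \<theta>"] in auto)
    qed
    show "((\<lambda>\<theta>. - u \<theta> * (1 + \<epsilon> \<theta>)) \<longlongrightarrow> - a) at_top"
      using tendsto_mult[OF tendsto_minus[OF u] tendsto_add[OF tendsto_const \<epsilon>, of 1]] by simp
    show "((\<lambda>\<theta>. - u \<theta>) \<longlongrightarrow> - a) at_top" by (rule tendsto_minus[OF u])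
  qed
qed

lemma closed_sublevel_continuous_on:
  fixes J :: "real \<Rightarrow> ereal"
  assumes "continuous_on {0..1} J"
  shows "closed {x\<in>{0..1}. J x \<le> b}"
proof -
  have "closed ({0..1} \<inter> J -` {..b})" by (rule continuous_closed_preimage[OF assms]) auto
  moreover have "{0..1} \<inter> J -` {..b} = {x\<in>{0..1}. J x \<le> b}" by auto
  ultimately show ?thesis by simp
qed

lemma continuous_on_rate_C: "c > 0 \<Longrightarrow> continuous_on {0..1} (rate_C c)"
  unfolding rate_C_def
  by (intro continuous_intros continuous_on_compose2[OF continuous_on_xlogx]) auto

lemma rate_D_le_ereal_iff: "x \<in> {0..1} \<Longrightarrow> rate_D x \<le> ereal r \<longleftrightarrow> x \<le> 1 - exp (- r)"
proof (cases "x = 1")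
  case False
  assume "x \<in> {0..1}"
  then have "0 < 1 - x" using False by simp
  then have "rate_D x \<le> ereal r \<longleftrightarrow> - r \<le> ln (1 - x)"
    using False by (auto simp: rate_D_def ln_div)
  also have "\<dots> \<longleftrightarrow> exp (- r) \<le> 1 - x" using \<open>0 < 1 - x\<close> by (rule ln_ge_iff)
  finally show ?thesis by linarith
qed (simp add: rate_D_def)

lemma closed_sublevel_rate_D: "closed {x\<in>{0..1}. rate_D x \<le> b}"
proof (cases b)
  case (real r)
  have "x \<in> {x\<in>{0..1}. rate_D x \<le> b} \<longleftrightarrow> x \<in> {0..1 - exp (- r)}" for x
    using rate_D_le_ereal_iff[of x r] exp_gt_zero[of "- r"] real
    by (cases "x \<in> {0..1}") (auto simp del: exp_gt_zero)
  then have "{x\<in>{0..1}. rate_D x \<le> b} = {0..1 - exp (- r)}" by blast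
  then show ?thesis by simp
next
  case MInf
  then have "{x\<in>{0..1}. rate_D x \<le> b} = {}" by (auto simp: rate_D_def)
  then show ?thesis by (metis closed_empty)
next
  case PInf
  then have "{x\<in>{0..1}. rate_D x \<le> b} = {0..1}" by auto
  then show ?thesis by simp
qed

lemma LDP01_case_B:
  assumes n: "filterlim n at_top at_top" and q: "filterlim (\<lambda>\<theta>. \<theta> / real (n \<theta>)) at_top at_top"
  shows "LDP01 (\<lambda>\<theta>. scaled_law \<theta> (n \<theta>)) (\<lambda>\<theta>. real (n \<theta>) * ln (\<theta> / real (n \<theta>))) (\<lambda>x. ereal x)"
proof -
  have "eventually (\<lambda>\<theta>. 1 \<le> real (n \<theta>) \<and> 1 < \<theta> / real (n \<theta>)) at_top"
    using n q[unfolded filterlim_at_top_dense] by (auto simp: filterlim_at_top intro: eventually_conj)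
  then have "eventually (\<lambda>\<theta>. ln (\<theta> / real (n \<theta>)) \<le> real (n \<theta>) * ln (\<theta> / real (n \<theta>))) at_top"
    by eventually_elim (auto intro: mult_right_mono[of 1, simplified])
  then have "filterlim (\<lambda>\<theta>. real (n \<theta>) * ln (\<theta> / real (n \<theta>))) at_top at_top"
    by (rule filterlim_at_top_mono[OF filterlim_compose[OF ln_at_top q]])
  then interpret X1_tail_asymptotics n "\<lambda>\<theta>. real (n \<theta>) * ln (\<theta> / real (n \<theta>))" "\<lambda>x. ereal x"
    using n tail_limit_case_B[OF n q] by unfold_locales (simp_all add: lim_ereal)
  show ?thesis by (intro LDP01_scaled_law closed_sublevel_continuous_on continuous_intros)
qed

lemma LDP01_case_C:
  assumes n: "filterlim n at_top at_top" and c: "c > 0" "((\<lambda>\<theta>. \<theta> / real (n \<theta>)) \<longlongrightarrow> c) at_top"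
  shows "LDP01 (\<lambda>\<theta>. scaled_law \<theta> (n \<theta>)) (\<lambda>\<theta>. \<theta>) (rate_C c)"
proof -
  have "- rate_C c a = ereal ((xlogx (c + 1 - a) - xlogx (1 - a) - xlogx (c + 1)) / c)" for a
    by (simp add: rate_C_def diff_divide_distrib add_divide_distrib)
  then interpret X1_tail_asymptotics n "\<lambda>\<theta>. \<theta>" "rate_C c"
    using n filterlim_ident tail_limit_case_C[OF n c] by unfold_locales (simp_all add: lim_ereal)
  show ?thesis by (intro LDP01_scaled_law closed_sublevel_continuous_on continuous_on_rate_C c)
qed

lemma LDP01_case_D:
  assumes n: "filterlim n at_top at_top" and q: "((\<lambda>\<theta>. \<theta> / real (n \<theta>)) \<longlongrightarrow> 0) at_top"
  shows "LDP01 (\<lambda>\<theta>. scaled_law \<theta> (n \<theta>)) (\<lambda>\<theta>. \<theta>) rate_D"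
proof -
  interpret X1_tail_asymptotics n "\<lambda>\<theta>. \<theta>" rate_D
  proof
    fix a :: real assume a: "a \<in> {0..1}"
    show "((\<lambda>\<theta>. ereal (ln (X1_tail \<theta> (n \<theta>) (ceil_index a (n \<theta>))) / \<theta>)) \<longlongrightarrow> - rate_D a) at_top"
    proof (cases "a = 1")
      case True
      then show ?thesis
        using tail_limit_case_D_1[OF n q, unfolded filterlim_at_bot_dense]
        by (simp add: rate_D_def tendsto_MInfty)
    next
      case False
      then have "- rate_D a = ereal (ln (1 - a))" using a by (simp add: rate_D_def ln_div)
      then show ?thesis using tail_limit_case_D[OF n q] a False by (simp add: lim_ereal)
    qed
  qed (use n filterlim_ident in auto)
  show ?thesis by (intro LDP01_scaled_law closed_sublevel_rate_D)
qed

theorem theorem4p7: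
  fixes n :: "real \<Rightarrow> nat"
  assumes "filterlim n at_top at_top"
  shows
    "(filterlim (\<lambda>\<theta>. \<theta> / real (n \<theta>)) at_top at_top \<longrightarrow>
        LDP01 (\<lambda>\<theta>. scaled_law \<theta> (n \<theta>)) (\<lambda>\<theta>. real (n \<theta>) * ln (\<theta> / real (n \<theta>))) (\<lambda>x. ereal x))
   \<and> (\<forall>c>0. ((\<lambda>\<theta>. \<theta> / real (n \<theta>)) \<longlongrightarrow> c) at_top \<longrightarrow>
        LDP01 (\<lambda>\<theta>. scaled_law \<theta> (n \<theta>)) (\<lambda>\<theta>. \<theta>) (rate_C c))
   \<and> (((\<lambda>\<theta>. \<theta> / real (n \<theta>)) \<longlongrightarrow> 0) at_top \<longrightarrow>
        LDP01 (\<lambda>\<theta>. scaled_law \<theta> (n \<theta>)) (\<lambda>\<theta>. \<theta>) rate_D)"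
  using LDP01_case_B[OF assms] LDP01_case_C[OF assms] LDP01_case_D[OF assms] by blast

end
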